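(* Let $(X,u)$ be a Čech closure space and $Y$ a topological space, let $Y^X$ be the set of all continuous maps $(X,u)\to Y$, let $(f_\lambda)_{\lambda\in\Lambda}$ be a net in $Y^X$ and $f\in Y^X$. Then $(f_\lambda)$ converges continuously to $f$ if and only if $$\overline{\lim_{\Lambda}}\, f_\lambda^{-1}(B)\subset f^{-1}(B)\quad\text{for every closed subset } B\subset Y.$$
   Context: A Čech closure space $(X,u)$ is a set $X$ with an operator $u:\mathcal P(X)\to\mathcal P(X)$ satisfying $u(\emptyset)=\emptyset$, $A\subset u(A)$, and $u(A\cup B)=u(A)\cup u(B)$. The interior is $\mathrm{int}_u A=X\setminus u(X\setminus A)$; $U$ is a neighbourhood of $x$ if $x\in\mathrm{int}_uU$. A topological space is regarded as a closure space with its (Kuratowski) closure operator. A map $f:(X,u)\to(Y,v)$ is continuous if $f(u(A))\subset v(f(A))$ for all $A\subset X$. A net $(x_\mu)$ converges to $x$ if it is eventually in every neighbourhood of $x$. A net $(f_\lambda)_{\lambda\in\Lambda}$ in $Y^X$ converges continuously to $f\in Y^X$ if, whenever a net $(x_\mu)_{\mu\in M}$ converges to $x$ in $(X,u)$, the net $(f_\lambda(x_\mu))_{(\lambda,\mu)\in\Lambda\times M}$ (coordinatewise order) converges to $f(x)$ in $Y$. For a net $(A_\lambda)_{\lambda\in\Lambda}$ of subsets of $X$, its upper limit $\overline{\lim_{\Lambda}}A_\lambda$ is the set of all $x\in X$ such that for every $\lambda_0\in\Lambda$ and every neighbourhood $U$ of $x$ there is $\lambda\ge\lambda_0$ with $A_\lambda\cap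 U\ne\emptyset$. *)

theory Defs
  imports "HOL-Analysis.Analysis"
begin

definition closure_space :: "'a set \<Rightarrow> ('a set \<Rightarrow> 'a set) \<Rightarrow> bool" where
  "closure_space X u \<longleftrightarrow>
     u {} = {} \<and>
     (\<forall>A. A \<subseteq> X \<longrightarrow> A \<subseteq> u A \<and> u A \<subseteq> X) \<and>
     (\<forall>A B. A \<subseteq> X \<longrightarrow> B \<subseteq> X \<longrightarrow> u (A \<union> B) = u A \<union> u B)"

definition cl_interior :: "'a set \<Rightarrow> ('a set \<Rightarrow> 'a set) \<Rightarrow> 'a set \<Rightarrow> 'a set" where
  "cl_interior X u A = X - u (X - A)"

definition cl_nbhd :: "'a set \<Rightarrow> ('a set \<Rightarrow> 'a set) \<Rightarrow> 'a set \<Rightarrow> 'a \<Rightarrow> bool" where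
  "cl_nbhd X u U x \<longleftrightarrow> x \<in> cl_interior X u U"

definition cl_continuous :: "'a set \<Rightarrow> ('a set \<Rightarrow> 'a set) \<Rightarrow> 'b set \<Rightarrow> ('b set \<Rightarrow> 'b set)
    \<Rightarrow> ('a \<Rightarrow> 'b) \<Rightarrow> bool" where
  "cl_continuous X u Y v f \<longleftrightarrow> f ` X \<subseteq> Y \<and> (\<forall>A. A \<subseteq> X \<longrightarrow> f ` (u A) \<subseteq> v (f ` A))"

definition directed_set :: "'i set \<Rightarrow> ('i \<Rightarrow> 'i \<Rightarrow> bool) \<Rightarrow> bool" where
  "directed_set D le \<longleftrightarrow> D \<noteq> {} \<and>
     (\<forall>a\<in>D. le a a) \<and>
     (\<forall>a\<in>D. \<forall>b\<in>D. \<forall>c\<in>D. le a b \<longrightarrow> le b c \<longrightarrow> le a c) \<and>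
     (\<forall>a\<in>D. \<forall>b\<in>D. \<exists>c\<in>D. le a c \<and> le b c)"

definition net_converges :: "'a set \<Rightarrow> ('a set \<Rightarrow> 'a set) \<Rightarrow> 'i set \<Rightarrow> ('i \<Rightarrow> 'i \<Rightarrow> bool)
    \<Rightarrow> ('i \<Rightarrow> 'a) \<Rightarrow> 'a \<Rightarrow> bool" where
  "net_converges X u D le x x0 \<longleftrightarrow>
     (\<forall>U. cl_nbhd X u U x0 \<longrightarrow> (\<exists>i0\<in>D. \<forall>i\<in>D. le i0 i \<longrightarrow> x i \<in> U))"

definition prod_le :: "('i \<Rightarrow> 'i \<Rightarrow> bool) \<Rightarrow> ('j \<Rightarrow> 'j \<Rightarrow> bool) \<Rightarrow> 'i \<times> 'j \<Rightarrow> 'i \<times> 'j \<Rightarrow> bool" where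
  "prod_le le1 le2 p q \<longleftrightarrow> le1 (fst p) (fst q) \<and> le2 (snd p) (snd q)"

text \<open>The nets (x_mu) in X range over directed sets whose carrier lives in the type 'm
  (HOL cannot quantify over types inside a formula).\<close>
definition converges_continuously ::
  "'m itself \<Rightarrow> 'a set \<Rightarrow> ('a set \<Rightarrow> 'a set) \<Rightarrow> 'b topology \<Rightarrow> 'l set \<Rightarrow> ('l \<Rightarrow> 'l \<Rightarrow> bool)
     \<Rightarrow> ('l \<Rightarrow> 'a \<Rightarrow> 'b) \<Rightarrow> ('a \<Rightarrow> 'b) \<Rightarrow> bool" where
  "converges_continuously (_::'m itself) X u T L le F f \<longleftrightarrow>
     (\<forall>(M::'m set) leM x x0.
        directed_set M leM \<and> x ` M \<subseteq> X \<and> x0 \<in> X \<and> net_converges X u M leM x x0 \<longrightarrow>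
        net_converges (topspace T) ((closure_of) T) (L \<times> M) (prod_le le leM)
          (\<lambda>(l, m). F l (x m)) (f x0))"

definition upper_limit :: "'a set \<Rightarrow> ('a set \<Rightarrow> 'a set) \<Rightarrow> 'l set \<Rightarrow> ('l \<Rightarrow> 'l \<Rightarrow> bool)
    \<Rightarrow> ('l \<Rightarrow> 'a set) \<Rightarrow> 'a set" where
  "upper_limit X u L le A = {x \<in> X. \<forall>l0\<in>L. \<forall>U. cl_nbhd X u U x \<longrightarrow>
       (\<exists>l\<in>L. le l0 l \<and> A l \<inter> U \<noteq> {})}"

end

theory Submission
  imports Defs
begin

text \<open>If \<open>x\<close> lies in the upper limit of \<open>f\<^sub>\<lambda>\<^sup>-\<^sup>1(B)\<close>, indexing by pairs (\<open>\<lambda>\<close>, neighbourhood of \<open>x\<close>)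
  yields a net converging to \<open>x\<close> along which the values \<open>f\<^sub>\<lambda> x\<^sub>\<mu>\<close> stay in \<open>B\<close> cofinally, so continuous
  convergence forces \<open>f x \<in> B\<close>. Conversely, if \<open>f\<^sub>\<lambda> x\<^sub>\<mu>\<close> is frequently outside a neighbourhood \<open>W\<close> of
  \<open>f x\<close>, then \<open>x\<close> lies in the upper limit of the preimages of the closed set \<open>B = cl(Y - W)\<close>, which
  does not contain \<open>f x\<close>.\<close>

lemma cl_nbhd_Int:
  assumes "closure_space X u" "cl_nbhd X u U x" "cl_nbhd X u V x"
  shows "cl_nbhd X u (U \<inter> V) x"
proof -
  have "u ((X - U) \<union> (X - V)) = u (X - U) \<union> u (X - V)"
    using assms(1) unfolding closure_space_def by (meson Diff_subset)
  then have "u (X - (U \<inter> V)) = u (X - U) \<union> u (X - V)"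
    by (simp only: Diff_Int)
  then show ?thesis
    using assms(2,3) unfolding cl_nbhd_def cl_interior_def by blast
qed

lemma cl_nbhd_carrier:
  assumes "closure_space X u" "x \<in> X"
  shows "cl_nbhd X u X x"
  using assms unfolding cl_nbhd_def cl_interior_def closure_space_def by auto

lemma cl_nbhd_topspace_Diff_closedin:
  assumes "closedin T B" "y \<in> topspace T" "y \<notin> B"
  shows "cl_nbhd (topspace T) ((closure_of) T) (topspace T - B) y"
proof -
  have "topspace T - (topspace T - B) = B"
    using closedin_subset[OF assms(1)] by blast
  then show ?thesis
    using assms closure_of_closedin[OF assms(1)] unfolding cl_nbhd_def cl_interior_def by auto
qed

lemma directed_set_nbhd_pairs:
  assumes "closure_space X u" "directed_set L le" "x \<in> X"
  shows "directed_set {p. fst p \<in> L \<and> cl_nbhd X u (snd p) x}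
    (\<lambda>p q. le (fst p) (fst q) \<and> snd q \<subseteq> snd p)"
  (is "directed_set ?M ?le")
proof -
  have L: "L \<noteq> {}" "\<And>a. a \<in> L \<Longrightarrow> le a a"
    "\<And>a b c. a \<in> L \<Longrightarrow> b \<in> L \<Longrightarrow> c \<in> L \<Longrightarrow> le a b \<Longrightarrow> le b c \<Longrightarrow> le a c"
    "\<And>a b. a \<in> L \<Longrightarrow> b \<in> L \<Longrightarrow> \<exists>c\<in>L. le a c \<and> le b c"
    using assms(2) unfolding directed_set_def by blast+
  show ?thesis
    unfolding directed_set_def
  proof (intro conjI)
    obtain l where "l \<in> L" using L(1) by blast
    then have "(l, X) \<in> ?M" using cl_nbhd_carrier[OF assms(1,3)] by simp
    then show "?M \<noteq> {}" by blast
    show "\<forall>p\<in>?M. ?le p p"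
      using L(2) by simp
    show "\<forall>p\<in>?M. \<forall>q\<in>?M. \<forall>r\<in>?M. ?le p q \<longrightarrow> ?le q r \<longrightarrow> ?le p r"
    proof (intro ballI impI)
      fix p q r assume "p \<in> ?M" "q \<in> ?M" "r \<in> ?M" "?le p q" "?le q r"
      then show "?le p r"
        using L(3)[of "fst p" "fst q" "fst r"] by auto
    qed
    show "\<forall>p\<in>?M. \<forall>q\<in>?M. \<exists>r\<in>?M. ?le p r \<and> ?le q r"
    proof (intro ballI)
      fix p q assume pq: "p \<in> ?M" "q \<in> ?M"
      then obtain c where "c \<in> L" "le (fst p) c" "le (fst q) c"
        using L(4) by auto
      moreover have "(c, snd p \<inter> snd q) \<in> ?M"
        using pq \<open>c \<in> L\<close> cl_nbhd_Int[OF assms(1)] by auto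
      ultimately show "\<exists>r\<in>?M. ?le p r \<and> ?le q r"
        by (intro bexI[of _ "(c, snd p \<inter> snd q)"]) auto
    qed
  qed
qed

lemma upper_limit_obtains_net:
  fixes L :: "'l set" and X :: "'a set"
  assumes "closure_space X u" "directed_set L le"
    and "\<forall>l\<in>L. A l \<subseteq> X" "x \<in> upper_limit X u L le A"
  obtains M :: "('l \<times> 'a set) set" and leM y idx
  where "directed_set M leM" "y ` M \<subseteq> X" "net_converges X u M leM y x"
    and "\<forall>m\<in>M. idx m \<in> L \<and> y m \<in> A (idx m)"
    and "\<forall>l\<in>L. \<forall>m\<in>M. \<exists>m'\<in>M. leM m m' \<and> le l (idx m')"
proof -
  have xX: "x \<in> X" using assms(4) unfolding upper_limit_def by blast
  have L: "L \<noteq> {}"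
    "\<And>a b c. a \<in> L \<Longrightarrow> b \<in> L \<Longrightarrow> c \<in> L \<Longrightarrow> le a b \<Longrightarrow> le b c \<Longrightarrow> le a c"
    "\<And>a b. a \<in> L \<Longrightarrow> b \<in> L \<Longrightarrow> \<exists>c\<in>L. le a c \<and> le b c"
    using assms(2) unfolding directed_set_def by blast+
  define M :: "('l \<times> 'a set) set" where "M = {p. fst p \<in> L \<and> cl_nbhd X u (snd p) x}"
  define leM :: "'l \<times> 'a set \<Rightarrow> 'l \<times> 'a set \<Rightarrow> bool"
    where "leM p q \<longleftrightarrow> le (fst p) (fst q) \<and> snd q \<subseteq> snd p" for p q
  have "\<forall>p\<in>M. \<exists>q. fst q \<in> L \<and> le (fst p) (fst q) \<and> snd q \<in> snd p \<and> snd q \<in> A (fst q)"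
    using assms(4) unfolding M_def upper_limit_def by fastforce
  then obtain g where g:
    "\<forall>p\<in>M. fst (g p) \<in> L \<and> le (fst p) (fst (g p)) \<and> snd (g p) \<in> snd p \<and> snd (g p) \<in> A (fst (g p))"
    by metis
  define idx where "idx = fst \<circ> g"
  define y where "y = snd \<circ> g"
  have choice: "\<And>p. p \<in> M \<Longrightarrow> idx p \<in> L \<and> le (fst p) (idx p) \<and> y p \<in> snd p \<and> y p \<in> A (idx p)"
    using g unfolding idx_def y_def by simp
  have "directed_set M leM"
    unfolding M_def leM_def[abs_def] by (rule directed_set_nbhd_pairs[OF assms(1,2) xX])
  moreover have "y ` M \<subseteq> X"
    using choice assms(3) unfolding M_def by blast
  moreover have "net_converges X u M leM y x"
    unfolding net_converges_def
  proof (intro allI impI)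
    fix U assume U: "cl_nbhd X u U x"
    obtain l where "l \<in> L" using L(1) by blast
    with U have "(l, U) \<in> M" unfolding M_def by simp
    moreover have "\<forall>m\<in>M. leM (l, U) m \<longrightarrow> y m \<in> U"
      using choice unfolding M_def leM_def by auto
    ultimately show "\<exists>m0\<in>M. \<forall>m\<in>M. leM m0 m \<longrightarrow> y m \<in> U" by blast
  qed
  moreover have "\<forall>m\<in>M. idx m \<in> L \<and> y m \<in> A (idx m)"
    using choice unfolding M_def by blast
  moreover have "\<forall>l\<in>L. \<forall>m\<in>M. \<exists>m'\<in>M. leM m m' \<and> le l (idx m')"
  proof (intro ballI)
    fix l m assume "l \<in> L" "m \<in> M"
    obtain c where c: "c \<in> L" "le l c" "le (fst m) c"
      using L(3) \<open>l \<in> L\<close> \<open>m \<in> M\<close> unfolding M_def by blast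
    then have "(c, snd m) \<in> M" using \<open>m \<in> M\<close> unfolding M_def by simp
    moreover have "le l (idx (c, snd m))"
    proof -
      have "idx (c, snd m) \<in> L" "le c (idx (c, snd m))"
        using choice[OF \<open>(c, snd m) \<in> M\<close>] by simp_all
      then show ?thesis
        using L(2)[OF \<open>l \<in> L\<close> \<open>c \<in> L\<close>] \<open>le l c\<close> by blast
    qed
    moreover have "leM m (c, snd m)"
      unfolding leM_def using c by simp
    ultimately show "\<exists>m'\<in>M. leM m m' \<and> le l (idx m')" by blast
  qed
  ultimately show ?thesis by (rule that)
qed

lemma upper_limit_subset_if_converges_continuously:
  fixes L :: "'l set" and X :: "'a set"
  assumes "closure_space X u" "directed_set L le" "f ` X \<subseteq> topspace T"
    and "converges_continuously TYPE('l \<times> 'a set) X u T L le F f"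
    and "closedin T B"
  shows "upper_limit X u L le (\<lambda>l. {x \<in> X. F l x \<in> B}) \<subseteq> {x \<in> X. f x \<in> B}"
proof
  fix x assume x: "x \<in> upper_limit X u L le (\<lambda>l. {x \<in> X. F l x \<in> B})"
  then have xX: "x \<in> X" unfolding upper_limit_def by blast
  obtain M :: "('l \<times> 'a set) set" and leM y idx
    where M: "directed_set M leM" "y ` M \<subseteq> X" "net_converges X u M leM y x"
      and hit: "\<forall>m\<in>M. idx m \<in> L \<and> y m \<in> {x \<in> X. F (idx m) x \<in> B}"
      and cofinal: "\<forall>l\<in>L. \<forall>m\<in>M. \<exists>m'\<in>M. leM m m' \<and> le l (idx m')"
    using upper_limit_obtains_net[OF assms(1,2) _ x] by blast
  have conv: "net_converges (topspace T) ((closure_of) T) (L \<times> M) (prod_le le leM)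
      (\<lambda>(l, m). F l (y m)) (f x)"
    using assms(4) M xX unfolding converges_continuously_def by blast
  show "x \<in> {x \<in> X. f x \<in> B}"
  proof (rule ccontr)
    assume "x \<notin> {x \<in> X. f x \<in> B}"
    then have "cl_nbhd (topspace T) ((closure_of) T) (topspace T - B) (f x)"
      using cl_nbhd_topspace_Diff_closedin[OF assms(5)] xX assms(3) by blast
    then obtain i0 where "i0 \<in> L \<times> M" and eventually:
      "\<forall>i\<in>L \<times> M. prod_le le leM i0 i \<longrightarrow> (\<lambda>(l, m). F l (y m)) i \<in> topspace T - B"
      using conv unfolding net_converges_def by blast
    then obtain l0 m0 where i0: "i0 = (l0, m0)" "l0 \<in> L" "m0 \<in> M"
      by blast
    then obtain m where m: "m \<in> M" "leM m0 m" "le l0 (idx m)"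
      using cofinal by blast
    then have "(idx m, m) \<in> L \<times> M" "prod_le le leM i0 (idx m, m)"
      using hit i0(1) unfolding prod_le_def by auto
    then have "F (idx m) (y m) \<notin> B"
      using eventually by auto
    then show False
      using hit m(1) by blast
  qed
qed

lemma frequently_in_imp_upper_limit:
  assumes "x ` M \<subseteq> X" "x0 \<in> X" "net_converges X u M leM x x0"
    and frequently: "\<forall>l0\<in>L. \<forall>m0\<in>M. \<exists>l\<in>L. \<exists>m\<in>M.
        prod_le le leM (l0, m0) (l, m) \<and> F l (x m) \<in> B"
  shows "x0 \<in> upper_limit X u L le (\<lambda>l. {x \<in> X. F l x \<in> B})"
  unfolding upper_limit_def
proof (intro CollectI conjI ballI allI impI \<open>x0 \<in> X\<close>)
  fix l0 U assume "l0 \<in> L" "cl_nbhd X u U x0"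
  then obtain m0 where "m0 \<in> M" and eventually: "\<forall>m\<in>M. leM m0 m \<longrightarrow> x m \<in> U"
    using assms(3) unfolding net_converges_def by blast
  then obtain l m where "l \<in> L" "m \<in> M" "le l0 l" "leM m0 m" "F l (x m) \<in> B"
    using frequently \<open>l0 \<in> L\<close> unfolding prod_le_def fst_conv snd_conv by blast
  moreover have "x m \<in> X" "x m \<in> U"
    using assms(1) eventually \<open>m \<in> M\<close> \<open>leM m0 m\<close> by auto
  ultimately show "\<exists>l\<in>L. le l0 l \<and> {x \<in> X. F l x \<in> B} \<inter> U \<noteq> {}"
    by blast
qed

lemma converges_continuously_if_upper_limit_subset:
  assumes "\<forall>l\<in>L. F l ` X \<subseteq> topspace T"
    and "\<forall>B. closedin T B \<longrightarrow>
      upper_limit X u L le (\<lambda>l. {x \<in> X. F l x \<in> B}) \<subseteq> {x \<in> X. f x \<in> B}"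
  shows "converges_continuously TYPE('m) X u T L le F f"
  unfolding converges_continuously_def
proof (intro allI impI, elim conjE)
  fix M :: "'m set" and leM x x0
  assume x: "x ` M \<subseteq> X" "x0 \<in> X" "net_converges X u M leM x x0"
  show "net_converges (topspace T) ((closure_of) T) (L \<times> M) (prod_le le leM)
      (\<lambda>(l, m). F l (x m)) (f x0)"
    unfolding net_converges_def
  proof (intro allI impI, rule ccontr)
    fix W assume W: "cl_nbhd (topspace T) ((closure_of) T) W (f x0)"
    assume not_eventually:
      "\<not> (\<exists>i0\<in>L \<times> M. \<forall>i\<in>L \<times> M. prod_le le leM i0 i \<longrightarrow> (\<lambda>(l, m). F l (x m)) i \<in> W)"
    define B where "B = T closure_of (topspace T - W)"
    have "topspace T - W \<subseteq> B"
      unfolding B_def by (rule closure_of_subset) blast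
    have outside: "\<forall>l0\<in>L. \<forall>m0\<in>M. \<exists>l\<in>L. \<exists>m\<in>M. prod_le le leM (l0, m0) (l, m) \<and> F l (x m) \<in> B"
    proof (intro ballI)
      fix l0 m0 assume "l0 \<in> L" "m0 \<in> M"
      then have "(l0, m0) \<in> L \<times> M" by simp
      then obtain i where "i \<in> L \<times> M" "prod_le le leM (l0, m0) i" "(\<lambda>(l, m). F l (x m)) i \<notin> W"
        using not_eventually by blast
      then obtain l m where lm: "l \<in> L" "m \<in> M" "prod_le le leM (l0, m0) (l, m)" "F l (x m) \<notin> W"
        by (cases i) auto
      moreover have "F l (x m) \<in> topspace T"
        using assms(1) x(1) lm(1,2) by blast
      ultimately show "\<exists>l\<in>L. \<exists>m\<in>M. prod_le le leM (l0, m0) (l, m) \<and> F l (x m) \<in> B"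
        using \<open>topspace T - W \<subseteq> B\<close> by blast
    qed
    have "x0 \<in> upper_limit X u L le (\<lambda>l. {x \<in> X. F l x \<in> B})"
      using frequently_in_imp_upper_limit[OF x outside] .
    moreover have "f x0 \<notin> B"
      using W unfolding B_def cl_nbhd_def cl_interior_def by blast
    moreover have "closedin T B"
      unfolding B_def by simp
    ultimately show False
      using assms(2) by blast
  qed
qed

theorem corollary1:
  fixes X :: "'a set" and u :: "'a set \<Rightarrow> 'a set" and T :: "'b topology"
    and L :: "'l set" and le :: "'l \<Rightarrow> 'l \<Rightarrow> bool"
    and F :: "'l \<Rightarrow> 'a \<Rightarrow> 'b" and f :: "'a \<Rightarrow> 'b"
  assumes "closure_space X u"
    and "directed_set L le"
    and "\<forall>l\<in>L. cl_continuous X u (topspace T) ((closure_of) T) (F l)"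
    and "cl_continuous X u (topspace T) ((closure_of) T) f"
  shows "(converges_continuously TYPE('l \<times> 'a set) X u T L le F f \<longleftrightarrow>
           (\<forall>B. closedin T B \<longrightarrow>
              upper_limit X u L le (\<lambda>l. {x \<in> X. F l x \<in> B}) \<subseteq> {x \<in> X. f x \<in> B}))
       \<and> ((\<forall>B. closedin T B \<longrightarrow>
              upper_limit X u L le (\<lambda>l. {x \<in> X. F l x \<in> B}) \<subseteq> {x \<in> X. f x \<in> B})
           \<longrightarrow> converges_continuously TYPE('m) X u T L le F f)"
proof -
  have "\<forall>l\<in>L. F l ` X \<subseteq> topspace T" "f ` X \<subseteq> topspace T"
    using assms(3,4) unfolding cl_continuous_def by blast+
  note to_upper = upper_limit_subset_if_converges_continuously[OF assms(1,2) \<open>f ` X \<subseteq> topspace T\<close>]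
  note from_upper = converges_continuously_if_upper_limit_subset[OF \<open>\<forall>l\<in>L. F l ` X \<subseteq> topspace T\<close>]
  let ?upper_limits_ok = "\<forall>B. closedin T B \<longrightarrow>
    upper_limit X u L le (\<lambda>l. {x \<in> X. F l x \<in> B}) \<subseteq> {x \<in> X. f x \<in> B}"
  have "converges_continuously TYPE('l \<times> 'a set) X u T L le F f \<Longrightarrow> ?upper_limits_ok"
    using to_upper by blast
  then show ?thesis
    by (intro conjI iffI impI) (assumption | erule from_upper)+
qed

end
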